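(* Let $\eta$ be a (sufficiently regular, e.g. classical) solution of the uniformly compressing curve-shortening flow described below, with $L(t)=L(\eta(t))$. Then (i) $\partial_t L=-L^{-3}\int_0^1\tilde\sigma\,|\partial_{ss}\eta|^2\,ds$; (ii) $\partial_{tt}\big(L(t)^2\big)\ge 0$.
   Context: $\mathbb S^1=\mathbb R/\mathbb Z$, $d\ge 2$, $L(\eta)=\int_0^1|\partial_s\eta|\,ds$. The uniformly compressing curve-shortening flow is: $\eta:[0,t^\ast)\times\mathbb S^1\to\mathbb R^d$ with, for each $t$, $\int_0^1\eta(t,s)\,ds=0$ and $|\partial_s\eta(t,s)|=L(t)>0$ for all $s$, satisfying $$\partial_t\eta=L(t)^{-2}\partial_s(\tilde\sigma\,\partial_s\eta),$$ where the function $\tilde\sigma(t,\cdot):\mathbb S^1\to\mathbb R$ satisfies, for all $(t,s)$, $$\partial_{ss}\tilde\sigma-L^{-2}\tilde\sigma|\partial_{ss}\eta|^2=-L^{-2}\int_0^1\tilde\sigma|\partial_{ss}\eta|^2\,ds,\qquad \int_0^1\tilde\sigma(t,s)\,ds=1.$$ *)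

theory Defs
  imports "HOL-Analysis.Analysis"
begin

text \<open>Functions of (t,s) are written curried: f t s. The circle S^1 = R/Z is
represented by 1-periodic functions of s on R.\<close>

definition ds :: "(real \<Rightarrow> real \<Rightarrow> 'a::real_normed_vector) \<Rightarrow> real \<Rightarrow> real \<Rightarrow> 'a" where
  "ds f t s = vector_derivative (\<lambda>r. f t r) (at s)"

definition dt :: "(real \<Rightarrow> real \<Rightarrow> 'a::real_normed_vector) \<Rightarrow> real \<Rightarrow> real \<Rightarrow> 'a" where
  "dt f t s = vector_derivative (\<lambda>r. f r s) (at t)"

fun Ck_on :: "nat \<Rightarrow> (real \<times> real) set \<Rightarrow> (real \<Rightarrow> real \<Rightarrow> 'a::real_normed_vector) \<Rightarrow> bool" where
  "Ck_on 0 U f = continuous_on U (\<lambda>p. f (fst p) (snd p))"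
| "Ck_on (Suc k) U f =
     (continuous_on U (\<lambda>p. f (fst p) (snd p)) \<and>
      (\<forall>p\<in>U. ((\<lambda>r. f (fst p) r) has_vector_derivative ds f (fst p) (snd p)) (at (snd p)) \<and>
              ((\<lambda>r. f r (snd p)) has_vector_derivative dt f (fst p) (snd p)) (at (fst p))) \<and>
      Ck_on k U (ds f) \<and> Ck_on k U (dt f))"

definition smooth_on2 :: "(real \<times> real) set \<Rightarrow> (real \<Rightarrow> real \<Rightarrow> 'a::real_normed_vector) \<Rightarrow> bool" where
  "smooth_on2 U f = (\<forall>k. Ck_on k U f)"

definition curve_length :: "(real \<Rightarrow> real \<Rightarrow> 'a::euclidean_space) \<Rightarrow> real \<Rightarrow> real" where
  "curve_length \<eta> t = integral {0..1} (\<lambda>s. norm (ds \<eta> t s))"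

definition ucsf :: "real \<Rightarrow> (real \<Rightarrow> real \<Rightarrow> 'a::euclidean_space) \<Rightarrow> (real \<Rightarrow> real \<Rightarrow> real) \<Rightarrow> bool" where
  "ucsf tstar \<eta> \<sigma> \<longleftrightarrow>
     0 < tstar \<and>
     smooth_on2 ({0<..<tstar} \<times> UNIV) \<eta> \<and> smooth_on2 ({0<..<tstar} \<times> UNIV) \<sigma> \<and>
     (\<forall>t\<in>{0<..<tstar}. \<forall>s. \<eta> t (s + 1) = \<eta> t s \<and> \<sigma> t (s + 1) = \<sigma> t s) \<and>
     (\<forall>t\<in>{0<..<tstar}. integral {0..1} (\<eta> t) = 0) \<and>
     (\<forall>t\<in>{0<..<tstar}. 0 < curve_length \<eta> t \<and>
         (\<forall>s. norm (ds \<eta> t s) = curve_length \<eta> t)) \<and>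
     (\<forall>t\<in>{0<..<tstar}. \<forall>s.
         dt \<eta> t s = (1 / (curve_length \<eta> t)^2) *\<^sub>R ds (\<lambda>t' s'. \<sigma> t' s' *\<^sub>R ds \<eta> t' s') t s) \<and>
     (\<forall>t\<in>{0<..<tstar}. \<forall>s.
         ds (ds \<sigma>) t s - \<sigma> t s * (norm (ds (ds \<eta>) t s))^2 / (curve_length \<eta> t)^2
           = - integral {0..1} (\<lambda>r. \<sigma> t r * (norm (ds (ds \<eta>) t r))^2) / (curve_length \<eta> t)^2) \<and>
     (\<forall>t\<in>{0<..<tstar}. integral {0..1} (\<sigma> t) = 1)"

end

theory Submission
  imports Defs "HOL-Library.Periodic_Fun"
begin

text \<open>
  (i) As \<open>|\<partial>\<^sub>s\<eta>| \<equiv> L\<close>, one has \<open>L(t) = |\<partial>\<^sub>s\<eta>(t,0)|\<close>. The flow equation and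
  \<open>\<partial>\<^sub>t\<partial>\<^sub>s = \<partial>\<^sub>s\<partial>\<^sub>t\<close> give \<open>\<partial>\<^sub>t\<partial>\<^sub>s\<eta> = L\<^sup>-\<^sup>2 \<partial>\<^sub>s\<^sup>2(\<sigma> \<partial>\<^sub>s\<eta>)\<close>, whose component along
  \<open>\<partial>\<^sub>s\<eta>\<close> is \<open>-L\<^sup>-\<^sup>2 I\<close> with \<open>I = \<integral>\<sigma>|\<partial>\<^sub>s\<^sub>s\<eta>|\<^sup>2\<close>, by the tension equation.

  (ii) Hence \<open>(L\<^sup>2)' = -2I/L\<^sup>2\<close>. The tension equation is the Euler-Lagrange equation of
  \<open>E\<^sub>t(h) = L(t)\<^sup>2\<integral>h'\<^sup>2 + \<integral>|\<partial>\<^sub>s\<^sub>s\<eta>(t)|\<^sup>2h\<^sup>2\<close> among profiles \<open>h\<close> of unit mean, and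
  \<open>I(t) = E\<^sub>t(\<sigma>(t))\<close> is its minimum. Freezing \<open>h = \<sigma>(t\<^sub>0)\<close> gives a function of \<open>t\<close> that
  dominates \<open>I\<close> and touches it at \<open>t\<^sub>0\<close>, which identifies \<open>I'(t\<^sub>0)\<close>. An integration by parts,
  the maximum principle \<open>\<sigma> \<ge> 0\<close> and Cauchy-Schwarz then yield \<open>(-2I/L\<^sup>2)' \<ge> 0\<close>.
\<close>

section \<open>Calculus on the real line\<close>

lemma periodic_has_vector_derivative_unique:
  fixes g :: "real \<Rightarrow> 'a::real_normed_vector"
  assumes "\<And>r. g (r + 1) = g r"
    and "(g has_vector_derivative a) (at (s + 1))" and "(g has_vector_derivative b) (at s)"
  shows "a = b"
proof -
  have "((\<lambda>r. r + 1) has_vector_derivative 1) (at s)"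
    by (auto intro!: derivative_eq_intros)
  from vector_diff_chain_at[OF this assms(2)]
  have "((\<lambda>r. g (r + 1)) has_vector_derivative a) (at s)"
    by (simp add: o_def)
  then show ?thesis
    using assms(1,3) vector_derivative_unique_at by fastforce
qed

lemma has_vector_derivative_const_imp_zero:
  fixes f :: "real \<Rightarrow> 'a::real_normed_vector"
  assumes "(f has_vector_derivative f') (at x)" and "\<And>r. f r = c"
  shows "f' = 0"
proof -
  have "f = (\<lambda>r. c)"
    using assms(2) by auto
  then show ?thesis
    using assms(1) vector_derivative_unique_at has_vector_derivative_const by metis
qed

lemma periodic_continuous_attains_min:
  fixes g :: "real \<Rightarrow> real"
  assumes per: "\<And>x. g (x + 1) = g x" and cont: "continuous_on {0..1} g"
  obtains x0 where "x0 \<in> {0..1}" and "\<And>y. g x0 \<le> g y"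
proof -
  interpret periodic_fun_simple' g by standard (rule per)
  obtain x0 where "x0 \<in> {0..1}" and x0: "\<And>y. y \<in> {0..1} \<Longrightarrow> g x0 \<le> g y"
    using continuous_attains_inf[OF _ _ cont] by fastforce
  have "g x0 \<le> g y" for y
  proof -
    have "g y = g (frac y)"
      using plus_of_int[of "frac y" "\<lfloor>y\<rfloor>"] by (simp add: frac_def)
    then show ?thesis
      using x0[of "frac y"] frac_lt_1[of y] by simp
  qed
  with \<open>x0 \<in> {0..1}\<close> show thesis
    by (rule that)
qed

lemma DERIV_local_min_second_nonneg:
  fixes f f' :: "real \<Rightarrow> real"
  assumes df: "\<And>x. DERIV f x :> f' x" and d2: "DERIV f' x0 :> c"
    and global_min: "\<And>y. f x0 \<le> f y"
  shows "0 \<le> c"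
proof (rule ccontr)
  assume "\<not> 0 \<le> c"
  then have "c < 0"
    by simp
  then obtain e where "e > 0" and dec: "\<And>h. 0 < h \<Longrightarrow> h < e \<Longrightarrow> f' (x0 + h) < f' x0"
    using DERIV_neg_dec_right[OF d2] by blast
  have "f' x0 = 0"
    by (rule DERIV_local_min[OF df zero_less_one]) (simp add: global_min)
  obtain z where "x0 < z" "z < x0 + e/2" and mvt: "f (x0 + e/2) - f x0 = e/2 * f' z"
    using MVT2[of x0 "x0 + e/2" f f'] \<open>e > 0\<close> df by auto
  have "f' z < 0"
    using dec[of "z - x0"] \<open>f' x0 = 0\<close> \<open>x0 < z\<close> \<open>z < x0 + e/2\<close> by simp
  then have "e/2 * f' z < 0"
    using \<open>e > 0\<close> by (simp add: mult_pos_neg)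
  then have "f (x0 + e/2) < f x0"
    using mvt by linarith
  then show False
    using global_min[of "x0 + e/2"] by simp
qed

lemma integral_by_parts_unit_interval:
  fixes f :: "real \<Rightarrow> 'a::real_normed_vector" and g :: "real \<Rightarrow> 'b::real_normed_vector"
    and prod :: "'a \<Rightarrow> 'b \<Rightarrow> 'c::banach"
  assumes bl: "bounded_bilinear prod"
    and df: "\<And>x. (f has_vector_derivative f' x) (at x)"
    and dg: "\<And>x. (g has_vector_derivative g' x) (at x)"
    and cf: "continuous_on {0..1} f'" and cg: "continuous_on {0..1} g'"
    and ends: "prod (f 1) (g 1) = prod (f 0) (g 0)"
  shows "integral {0..1} (\<lambda>x. prod (f' x) (g x)) = - integral {0..1} (\<lambda>x. prod (f x) (g' x))"
proof -
  interpret bounded_bilinear prod by fact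
  have cf0: "continuous_on {0..1} f" and cg0: "continuous_on {0..1} g"
    using df dg has_vector_derivative_continuous by (blast intro: continuous_at_imp_continuous_on)+
  have "(\<lambda>x. prod (f x) (g' x)) integrable_on {0..1}"
    by (intro integrable_continuous_interval continuous_on[OF cf0 cg])
  then have "((\<lambda>x. prod (f' x) (g x)) has_integral - integral {0..1} (\<lambda>x. prod (f x) (g' x))) {0..1}"
    by (intro integration_by_parts[OF bl _ cf0 cg0 df dg]) (use ends in auto)
  then show ?thesis by (rule integral_unique)
qed

lemma has_field_derivative_integral_param:
  fixes F Ft :: "real \<Rightarrow> real \<Rightarrow> real"
  assumes U: "open U" "convex U" "t \<in> U"
    and dF: "\<And>\<tau> s. \<tau> \<in> U \<Longrightarrow> s \<in> {0..1} \<Longrightarrow> ((\<lambda>\<tau>. F \<tau> s) has_real_derivative Ft \<tau> s) (at \<tau>)"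
    and cF: "\<And>\<tau>. \<tau> \<in> U \<Longrightarrow> continuous_on {0..1} (F \<tau>)"
    and cFt: "continuous_on (U \<times> {0..1}) (\<lambda>p. Ft (fst p) (snd p))"
  shows "((\<lambda>\<tau>. integral {0..1} (F \<tau>)) has_real_derivative integral {0..1} (Ft t)) (at t)"
proof -
  have "((\<lambda>\<tau>. integral (cbox 0 1) (F \<tau>)) has_real_derivative integral (cbox 0 1) (Ft t)) (at t within U)"
  proof (rule leibniz_rule_field_derivative[OF _ _ _ U(3,2)])
    show "((\<lambda>\<tau>. F \<tau> s) has_real_derivative Ft \<tau> s) (at \<tau> within U)"
      if "\<tau> \<in> U" "s \<in> cbox 0 1" for \<tau> s
      using dF[of \<tau> s] that by (auto intro: has_field_derivative_at_within)
    show "F \<tau> integrable_on cbox 0 1" if "\<tau> \<in> U" for \<tau>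
      using cF that by (simp add: integrable_continuous_interval)
    show "continuous_on (U \<times> cbox 0 1) (\<lambda>(\<tau>, s). Ft \<tau> s)"
      using cFt by (simp add: case_prod_beta)
  qed
  then show ?thesis
    using at_within_open[OF U(3,1)] by (simp only: cbox_interval)
qed


section \<open>Functions of \<open>(t, s)\<close>\<close>

lemma smooth_on2_Ck_on_Suc: "smooth_on2 U f \<Longrightarrow> Ck_on (Suc k) U f"
  by (simp add: smooth_on2_def)

lemma smooth_on2_ds:
  assumes "smooth_on2 U f" shows "smooth_on2 U (ds f)"
  using smooth_on2_Ck_on_Suc[OF assms] by (simp add: smooth_on2_def)

lemma smooth_on2_dt:
  assumes "smooth_on2 U f" shows "smooth_on2 U (dt f)"
  using smooth_on2_Ck_on_Suc[OF assms] by (simp add: smooth_on2_def)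

lemma smooth_on2_continuous_on: "smooth_on2 U f \<Longrightarrow> continuous_on U (\<lambda>p. f (fst p) (snd p))"
  using smooth_on2_Ck_on_Suc[of U f 0] by simp

lemma smooth_on2_has_vector_derivative_ds:
  "smooth_on2 U f \<Longrightarrow> (t, s) \<in> U \<Longrightarrow> (f t has_vector_derivative ds f t s) (at s)"
  using smooth_on2_Ck_on_Suc[of U f 0] by fastforce

lemma smooth_on2_has_vector_derivative_dt:
  "smooth_on2 U f \<Longrightarrow> (t, s) \<in> U \<Longrightarrow> ((\<lambda>r. f r s) has_vector_derivative dt f t s) (at t)"
  using smooth_on2_Ck_on_Suc[of U f 0] by fastforce

lemma smooth_on2_continuous_on_slice:
  assumes "smooth_on2 U f" and "{t} \<times> S \<subseteq> U"
  shows "continuous_on S (f t)"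
proof -
  have "Pair t ` S \<subseteq> U"
    using assms(2) by auto
  moreover have "continuous_on S (Pair t)"
    using continuous_on_Pair[OF continuous_on_const continuous_on_id] by simp
  ultimately show ?thesis
    using continuous_on_compose2[OF smooth_on2_continuous_on[OF assms(1)], of S "Pair t"] by simp
qed

lemma ds_periodic:
  assumes sm: "smooth_on2 U f" and U: "{t} \<times> UNIV \<subseteq> U" and per: "\<And>s. f t (s + 1) = f t s"
  shows "ds f t (s + 1) = ds f t s"
proof (rule periodic_has_vector_derivative_unique[of "f t"])
  show "f t (r + 1) = f t r" for r
    by (rule per)
  have "(f t has_vector_derivative ds f t r) (at r)" for r
    using U by (intro smooth_on2_has_vector_derivative_ds[OF sm]) auto
  then show "(f t has_vector_derivative ds f t (s + 1)) (at (s + 1))"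
    and "(f t has_vector_derivative ds f t s) (at s)" by blast+
qed

text \<open>Differentiating \<open>f \<tau> x - f \<tau> c = \<integral>\<^sub>c\<^sup>x \<partial>\<^sub>s f \<tau>\<close> in \<open>\<tau>\<close> under the integral sign.\<close>
lemma dt_eq_integral_dt_ds:
  fixes f :: "real \<Rightarrow> real \<Rightarrow> 'a::euclidean_space"
  assumes sm: "smooth_on2 (V \<times> UNIV) f" and V: "open V" "convex V" "t \<in> V" and "c \<le> x"
  shows "dt f t x = dt f t c + integral {c..x} (dt (ds f) t)"
proof -
  have sm_ds: "smooth_on2 (V \<times> UNIV) (ds f)" and sm_dtds: "smooth_on2 (V \<times> UNIV) (dt (ds f))"
    using sm by (simp_all add: smooth_on2_ds smooth_on2_dt)
  have ftc: "f \<tau> x - f \<tau> c = integral {c..x} (ds f \<tau>)" if "\<tau> \<in> V" for \<tau>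
  proof -
    have "(ds f \<tau> has_integral f \<tau> x - f \<tau> c) {c..x}"
      using that \<open>c \<le> x\<close> smooth_on2_has_vector_derivative_ds[OF sm]
      by (intro fundamental_theorem_of_calculus) (auto simp: has_vector_derivative_at_within)
    then show ?thesis
      by (simp add: integral_unique)
  qed
  have "((\<lambda>\<tau>. integral (cbox c x) (ds f \<tau>)) has_vector_derivative integral (cbox c x) (dt (ds f) t))
      (at t within V)"
  proof (rule leibniz_rule_vector_derivative[OF _ _ _ V(3,2)])
    show "((\<lambda>\<tau>. ds f \<tau> r) has_vector_derivative dt (ds f) \<tau> r) (at \<tau> within V)" if "\<tau> \<in> V" for \<tau> r
      using smooth_on2_has_vector_derivative_dt[OF sm_ds, of \<tau> r] that
      by (simp add: has_vector_derivative_at_within)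
    show "ds f \<tau> integrable_on cbox c x" if "\<tau> \<in> V" for \<tau>
      using that by (intro integrable_continuous smooth_on2_continuous_on_slice[OF sm_ds]) auto
    have "continuous_on (V \<times> cbox c x) (\<lambda>p. dt (ds f) (fst p) (snd p))"
      by (rule continuous_on_subset[OF smooth_on2_continuous_on[OF sm_dtds]]) auto
    then show "continuous_on (V \<times> cbox c x) (\<lambda>(\<tau>, r). dt (ds f) \<tau> r)"
      by (simp add: case_prod_beta)
  qed
  then have leibniz: "((\<lambda>\<tau>. integral {c..x} (ds f \<tau>)) has_vector_derivative integral {c..x} (dt (ds f) t))
      (at t)"
    using at_within_open[OF V(3,1)] by simp
  have "((\<lambda>\<tau>. f \<tau> x - f \<tau> c) has_vector_derivative dt f t x - dt f t c) (at t)"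
    using V(3) by (intro derivative_intros smooth_on2_has_vector_derivative_dt[OF sm]) auto
  then have "((\<lambda>\<tau>. integral {c..x} (ds f \<tau>)) has_vector_derivative dt f t x - dt f t c) (at t)"
    by (rule has_vector_derivative_transform_within_open[OF _ V(1,3)]) (use ftc in auto)
  then have "dt f t x - dt f t c = integral {c..x} (dt (ds f) t)"
    using leibniz vector_derivative_unique_at by blast
  then show ?thesis
    by (metis add.commute diff_eq_eq)
qed

lemma dt_ds_commute:
  fixes f :: "real \<Rightarrow> real \<Rightarrow> 'a::euclidean_space"
  assumes sm: "smooth_on2 (V \<times> UNIV) f" and V: "open V" "convex V" "t \<in> V"
  shows "dt (ds f) t s = ds (dt f) t s"
proof -
  define c d where "c = s - 1" and "d = s + 1"
  have "continuous_on {c..d} (dt (ds f) t)"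
    using V(3) by (intro smooth_on2_continuous_on_slice[OF smooth_on2_dt[OF smooth_on2_ds[OF sm]]]) auto
  then have "((\<lambda>x. integral {c..x} (dt (ds f) t)) has_vector_derivative dt (ds f) t s) (at s within {c..d})"
    by (intro integral_has_vector_derivative) (auto simp: c_def d_def)
  then have "((\<lambda>x. integral {c..x} (dt (ds f) t)) has_vector_derivative dt (ds f) t s) (at s)"
    using at_within_Icc_at[of c s d] by (simp add: c_def d_def)
  then have "((\<lambda>x. dt f t c + integral {c..x} (dt (ds f) t)) has_vector_derivative dt (ds f) t s) (at s)"
    using has_vector_derivative_add[OF has_vector_derivative_const] by fastforce
  then have "(dt f t has_vector_derivative dt (ds f) t s) (at s)"
  proof (rule has_vector_derivative_transform_within_open[where S = "{c<..}"])
    show "dt f t c + integral {c..y} (dt (ds f) t) = dt f t y" if "y \<in> {c<..}" for y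
      using dt_eq_integral_dt_ds[OF sm V, of c y] that by simp
  qed (auto simp: c_def)
  moreover have "(dt f t has_vector_derivative ds (dt f) t s) (at s)"
    using V(3) by (intro smooth_on2_has_vector_derivative_ds[OF smooth_on2_dt[OF sm]]) auto
  ultimately show ?thesis
    using vector_derivative_unique_at by blast
qed


section \<open>Length along the flow\<close>

locale ucsf_flow =
  fixes T :: real and \<eta> :: "real \<Rightarrow> real \<Rightarrow> 'a::euclidean_space" and \<sigma> :: "real \<Rightarrow> real \<Rightarrow> real"
  assumes ucsf: "ucsf T \<eta> \<sigma>"
begin

abbreviation "V \<equiv> {0<..<T}"
abbreviation "L \<equiv> curve_length \<eta>"
abbreviation "u \<equiv> ds \<eta>"
abbreviation "u1 \<equiv> ds u"
abbreviation "u2 \<equiv> ds u1"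
abbreviation "\<sigma>1 \<equiv> ds \<sigma>"
abbreviation "\<sigma>2 \<equiv> ds \<sigma>1"
abbreviation "\<kappa> t s \<equiv> (norm (u1 t s))\<^sup>2"
abbreviation "I t \<equiv> integral {0..1} (\<lambda>s. \<sigma> t s * \<kappa> t s)"

text \<open>\<open>v = \<partial>\<^sub>s\<^sup>2(\<sigma> \<partial>\<^sub>s\<eta>)\<close>.\<close>
definition v :: "real \<Rightarrow> real \<Rightarrow> 'a" where
  "v t s = \<sigma>2 t s *\<^sub>R u t s + (2 * \<sigma>1 t s) *\<^sub>R u1 t s + \<sigma> t s *\<^sub>R u2 t s"

lemma smooth_eta: "smooth_on2 (V \<times> UNIV) \<eta>"
  and smooth_sigma: "smooth_on2 (V \<times> UNIV) \<sigma>"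
  and eta_periodic: "t \<in> V \<Longrightarrow> \<eta> t (s + 1) = \<eta> t s"
  and sigma_periodic: "t \<in> V \<Longrightarrow> \<sigma> t (s + 1) = \<sigma> t s"
  and integral_sigma: "t \<in> V \<Longrightarrow> integral {0..1} (\<sigma> t) = 1"
  and length_pos: "t \<in> V \<Longrightarrow> 0 < L t"
  and norm_u: "t \<in> V \<Longrightarrow> norm (u t s) = L t"
  and flow_eq: "t \<in> V \<Longrightarrow> dt \<eta> t s = (1 / (L t)\<^sup>2) *\<^sub>R ds (\<lambda>t' s'. \<sigma> t' s' *\<^sub>R u t' s') t s"
  and tension_ode: "t \<in> V \<Longrightarrow> \<sigma>2 t s - \<sigma> t s * \<kappa> t s / (L t)\<^sup>2 = - I t / (L t)\<^sup>2"
  using ucsf unfolding ucsf_def by (auto simp: mult.commute)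

lemma smooth_u: "smooth_on2 (V \<times> UNIV) u" and smooth_u1: "smooth_on2 (V \<times> UNIV) u1"
  and smooth_u2: "smooth_on2 (V \<times> UNIV) u2" and smooth_sigma1: "smooth_on2 (V \<times> UNIV) \<sigma>1"
  and smooth_sigma2: "smooth_on2 (V \<times> UNIV) \<sigma>2"
  by (intro smooth_on2_ds smooth_eta smooth_sigma)+

lemma u_periodic: "t \<in> V \<Longrightarrow> u t (s + 1) = u t s"
  by (rule ds_periodic[OF smooth_eta]) (auto simp: eta_periodic)

lemma u1_periodic: "t \<in> V \<Longrightarrow> u1 t (s + 1) = u1 t s"
  by (rule ds_periodic[OF smooth_u]) (auto simp: u_periodic)

lemma u2_periodic: "t \<in> V \<Longrightarrow> u2 t (s + 1) = u2 t s"
  by (rule ds_periodic[OF smooth_u1]) (auto simp: u1_periodic)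

lemma sigma1_periodic: "t \<in> V \<Longrightarrow> \<sigma>1 t (s + 1) = \<sigma>1 t s"
  by (rule ds_periodic[OF smooth_sigma]) (auto simp: sigma_periodic)

lemma sigma2_periodic: "t \<in> V \<Longrightarrow> \<sigma>2 t (s + 1) = \<sigma>2 t s"
  by (rule ds_periodic[OF smooth_sigma1]) (auto simp: sigma1_periodic)

lemma sigma_has_derivative: "t \<in> V \<Longrightarrow> (\<sigma> t has_real_derivative \<sigma>1 t s) (at s)"
  and sigma1_has_derivative: "t \<in> V \<Longrightarrow> (\<sigma>1 t has_real_derivative \<sigma>2 t s) (at s)"
  and u_has_derivative: "t \<in> V \<Longrightarrow> (u t has_vector_derivative u1 t s) (at s)"
  and u1_has_derivative: "t \<in> V \<Longrightarrow> (u1 t has_vector_derivative u2 t s) (at s)"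
  using smooth_on2_has_vector_derivative_ds[OF smooth_sigma, of t s]
    smooth_on2_has_vector_derivative_ds[OF smooth_sigma1, of t s]
    smooth_on2_has_vector_derivative_ds[OF smooth_u, of t s]
    smooth_on2_has_vector_derivative_ds[OF smooth_u1, of t s]
  by (simp_all add: has_real_derivative_iff_has_vector_derivative)

lemma continuous_on_sigma: "t \<in> V \<Longrightarrow> continuous_on S (\<sigma> t)"
  by (rule smooth_on2_continuous_on_slice[OF smooth_sigma]) auto

lemma continuous_on_sigma1: "t \<in> V \<Longrightarrow> continuous_on S (\<sigma>1 t)"
  by (rule smooth_on2_continuous_on_slice[OF smooth_sigma1]) auto

lemma continuous_on_sigma2: "t \<in> V \<Longrightarrow> continuous_on S (\<sigma>2 t)"
  by (rule smooth_on2_continuous_on_slice[OF smooth_sigma2]) auto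

lemma continuous_on_u: "t \<in> V \<Longrightarrow> continuous_on S (u t)"
  by (rule smooth_on2_continuous_on_slice[OF smooth_u]) auto

lemma continuous_on_u1: "t \<in> V \<Longrightarrow> continuous_on S (u1 t)"
  by (rule smooth_on2_continuous_on_slice[OF smooth_u1]) auto

lemma continuous_on_u2: "t \<in> V \<Longrightarrow> continuous_on S (u2 t)"
  by (rule smooth_on2_continuous_on_slice[OF smooth_u2]) auto

lemma inner_u_u: "t \<in> V \<Longrightarrow> u t s \<bullet> u t s = (L t)\<^sup>2"
  using norm_u by (simp flip: power2_norm_eq_inner)

lemma inner_u_u1: assumes "t \<in> V" shows "u t s \<bullet> u1 t s = 0"
proof -
  have "((\<lambda>r. u t r \<bullet> u t r) has_vector_derivative u t s \<bullet> u1 t s + u1 t s \<bullet> u t s) (at s)"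
    using assms by (intro bounded_bilinear.has_vector_derivative[OF bounded_bilinear_inner] u_has_derivative)
  then have "u t s \<bullet> u1 t s + u1 t s \<bullet> u t s = 0"
    by (rule has_vector_derivative_const_imp_zero) (rule inner_u_u[OF assms])
  then show ?thesis
    by (simp add: inner_commute)
qed

lemma inner_u_u2: assumes "t \<in> V" shows "u t s \<bullet> u2 t s = - (u1 t s \<bullet> u1 t s)"
proof -
  have "((\<lambda>r. u t r \<bullet> u1 t r) has_vector_derivative u t s \<bullet> u2 t s + u1 t s \<bullet> u1 t s) (at s)"
    using assms by (intro bounded_bilinear.has_vector_derivative[OF bounded_bilinear_inner]
        u_has_derivative u1_has_derivative)
  then have "u t s \<bullet> u2 t s + u1 t s \<bullet> u1 t s = 0"
    by (rule has_vector_derivative_const_imp_zero) (rule inner_u_u1[OF assms])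
  then show ?thesis
    by simp
qed

lemma tension_eq: "t \<in> V \<Longrightarrow> (L t)\<^sup>2 * \<sigma>2 t s = \<sigma> t s * \<kappa> t s - I t"
  using tension_ode[of t s] length_pos[of t] by (simp add: field_simps)

lemma dt_u_eq: assumes t: "t \<in> V" shows "dt u t s = (1 / (L t)\<^sup>2) *\<^sub>R v t s"
proof -
  have "((\<lambda>r. \<sigma> t r *\<^sub>R u t r) has_vector_derivative \<sigma> t r *\<^sub>R u1 t r + \<sigma>1 t r *\<^sub>R u t r) (at r)" for r
    using t by (intro has_vector_derivative_scaleR sigma_has_derivative u_has_derivative)
  then have ds_tension: "ds (\<lambda>t' s'. \<sigma> t' s' *\<^sub>R u t' s') t r = \<sigma>1 t r *\<^sub>R u t r + \<sigma> t r *\<^sub>R u1 t r" for r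
    unfolding ds_def by (simp add: vector_derivative_at add.commute)
  have "((\<lambda>r. \<sigma>1 t r *\<^sub>R u t r + \<sigma> t r *\<^sub>R u1 t r) has_vector_derivative v t s) (at s)"
    using t unfolding v_def
    by (auto intro!: derivative_eq_intros sigma_has_derivative sigma1_has_derivative
        u_has_derivative u1_has_derivative simp: algebra_simps scaleR_add_left [symmetric])
  moreover have "dt \<eta> t = (\<lambda>r. (1 / (L t)\<^sup>2) *\<^sub>R (\<sigma>1 t r *\<^sub>R u t r + \<sigma> t r *\<^sub>R u1 t r))"
    using t by (simp add: flow_eq ds_tension fun_eq_iff)
  ultimately have "(dt \<eta> t has_vector_derivative (1 / (L t)\<^sup>2) *\<^sub>R v t s) (at s)"
    using bounded_linear.has_vector_derivative[OF bounded_linear_scaleR_right] by simp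
  then show ?thesis
    using dt_ds_commute[OF smooth_eta _ _ t] unfolding ds_def[of "dt \<eta>"]
    by (simp add: vector_derivative_at)
qed

lemma inner_u_v: "t \<in> V \<Longrightarrow> u t s \<bullet> v t s = - I t"
  using inner_u_u[of t s] inner_u_u1[of t s] inner_u_u2[of t s] tension_eq[of t s]
  unfolding v_def by (simp add: inner_add_right power2_norm_eq_inner algebra_simps)

lemma length_has_derivative:
  assumes t: "t \<in> V" shows "(L has_real_derivative - I t / (L t) ^ 3) (at t)"
proof -
  have u0: "u t 0 \<noteq> 0"
    using norm_u[OF t, of 0] length_pos[OF t] by auto
  have "dt u t 0 \<bullet> sgn (u t 0) = (1 / (L t)\<^sup>2) * (u t 0 \<bullet> v t 0) / L t"
    unfolding dt_u_eq[OF t] sgn_div_norm norm_u[OF t] by (simp add: inner_commute divide_inverse)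
  also have "\<dots> = - I t / (L t) ^ 3"
    using inner_u_v[OF t, of 0] by (simp add: power3_eq_cube power2_eq_square)
  finally have rate: "dt u t 0 \<bullet> sgn (u t 0) = - I t / (L t) ^ 3" .
  have "((\<lambda>\<tau>. u \<tau> 0) has_vector_derivative dt u t 0) (at t)"
    using t by (intro smooth_on2_has_vector_derivative_dt[OF smooth_u]) auto
  from has_derivative_compose[OF this[unfolded has_vector_derivative_def] has_derivative_norm[OF u0]]
  have "((\<lambda>\<tau>. norm (u \<tau> 0)) has_real_derivative dt u t 0 \<bullet> sgn (u t 0)) (at t)"
    by (simp add: has_field_derivative_def mult_commute_abs)
  then show ?thesis
    unfolding rate
  proof (rule has_field_derivative_transform_within_open[where S = V])
    show "norm (u \<tau> 0) = L \<tau>" if "\<tau> \<in> V" for \<tau>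
      using norm_u[OF that] .
  qed (use t in auto)
qed

lemma length_sq_has_derivative:
  assumes t: "t \<in> V" shows "((\<lambda>\<tau>. (L \<tau>)\<^sup>2) has_real_derivative - 2 * I t / (L t)\<^sup>2) (at t)"
  using DERIV_power[OF length_has_derivative[OF t], of 2] length_pos[OF t]
  by (simp add: field_simps power3_eq_cube power2_eq_square)


subsection \<open>The tension as an energy minimiser\<close>

lemma tension_weak_form:
  assumes t: "t \<in> V" and dh: "\<And>x. (h has_real_derivative h' x) (at x)" and ends: "h 1 = h 0"
  shows "integral {0..1} (\<lambda>s. (L t)\<^sup>2 * \<sigma>1 t s * h' s + \<kappa> t s * \<sigma> t s * h s) = I t * integral {0..1} h"
proof -
  have "((\<lambda>s. \<sigma>1 t s * h s) has_real_derivative \<sigma>1 t s * h' s + \<sigma>2 t s * h s) (at s)" for s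
    using DERIV_mult[OF sigma1_has_derivative[OF t] dh] by (simp add: algebra_simps)
  then have "((\<lambda>s. \<sigma>1 t s * h s) has_vector_derivative \<sigma>1 t s * h' s + \<sigma>2 t s * h s) (at s within {0..1})"
    for s
    by (simp add: has_real_derivative_iff_has_vector_derivative has_vector_derivative_at_within)
  then have "((\<lambda>s. \<sigma>1 t s * h' s + \<sigma>2 t s * h s) has_integral \<sigma>1 t 1 * h 1 - \<sigma>1 t 0 * h 0) {0..1}"
    by (intro fundamental_theorem_of_calculus) auto
  then have boundary: "((\<lambda>s. \<sigma>1 t s * h' s + \<sigma>2 t s * h s) has_integral 0) {0..1}"
    using sigma1_periodic[OF t, of 0] ends by simp
  have "continuous_on {0..1} h"
    using dh by (intro continuous_at_imp_continuous_on) (blast intro: DERIV_isCont)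
  then have "(h has_integral integral {0..1} h) {0..1}"
    by (intro integrable_integral integrable_continuous_interval)
  from has_integral_add[OF has_integral_mult_right[OF this] has_integral_mult_right[OF boundary]]
  have "((\<lambda>s. I t * h s + (L t)\<^sup>2 * (\<sigma>1 t s * h' s + \<sigma>2 t s * h s)) has_integral I t * integral {0..1} h)
      {0..1}"
    by (simp only: add_0_right mult_zero_right)
  moreover have "(L t)\<^sup>2 * \<sigma>1 t s * h' s + \<kappa> t s * \<sigma> t s * h s
      = I t * h s + (L t)\<^sup>2 * (\<sigma>1 t s * h' s + \<sigma>2 t s * h s)" for s
    using tension_eq[OF t, of s] by algebra
  ultimately show ?thesis
    by (simp only: integral_unique)
qed

text \<open>\<open>energy t t0 = E\<^sub>t(\<sigma> t0)\<close> for the quadratic form \<open>E\<^sub>t\<close> whose Euler-Lagrange equation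
  under the unit-mean constraint is the tension equation.\<close>
definition energy :: "real \<Rightarrow> real \<Rightarrow> real" where
  "energy t t0 = (L t)\<^sup>2 * integral {0..1} (\<lambda>s. (\<sigma>1 t0 s)\<^sup>2) + integral {0..1} (\<lambda>s. \<kappa> t s * (\<sigma> t0 s)\<^sup>2)"

lemma energy_eq_integral:
  assumes "t \<in> V" "t0 \<in> V"
  shows "energy t t0 = integral {0..1} (\<lambda>s. (L t)\<^sup>2 * (\<sigma>1 t0 s)\<^sup>2 + \<kappa> t s * (\<sigma> t0 s)\<^sup>2)"
proof -
  note [continuous_intros] = continuous_on_sigma[OF assms(2)] continuous_on_sigma1[OF assms(2)]
    continuous_on_u1[OF assms(1)]
  show ?thesis
    unfolding energy_def
    by (subst integral_add) (auto intro!: integrable_continuous_interval continuous_intros)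
qed

lemma energy_self: assumes t: "t \<in> V" shows "energy t t = I t"
proof -
  have "integral {0..1} (\<lambda>s. (L t)\<^sup>2 * \<sigma>1 t s * \<sigma>1 t s + \<kappa> t s * \<sigma> t s * \<sigma> t s)
      = I t * integral {0..1} (\<sigma> t)"
    using sigma_periodic[OF t, of 0] by (intro tension_weak_form[OF t] sigma_has_derivative[OF t]) simp
  then show ?thesis
    using integral_sigma[OF t] by (simp add: energy_eq_integral[OF t t] power2_eq_square mult.assoc)
qed

lemma I_nonneg: assumes t: "t \<in> V" shows "0 \<le> I t"
proof -
  note [continuous_intros] = continuous_on_sigma[OF t] continuous_on_sigma1[OF t] continuous_on_u1[OF t]
  have "0 \<le> energy t t"
    unfolding energy_def
    by (intro add_nonneg_nonneg mult_nonneg_nonneg integral_nonneg integrable_continuous_interval)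
      (auto intro!: continuous_intros)
  then show ?thesis
    using energy_self[OF t] by simp
qed

lemma sigma_eq_one_if_I_eq_zero:
  assumes t: "t \<in> V" and I0: "I t = 0" and x: "x \<in> {0..1}"
  shows "\<sigma> t x = 1"
proof -
  note [continuous_intros] = continuous_on_sigma[OF t] continuous_on_sigma1[OF t] continuous_on_u1[OF t]
  have "0 \<le> integral {0..1} (\<lambda>s. (\<sigma>1 t s)\<^sup>2)" "0 \<le> integral {0..1} (\<lambda>s. \<kappa> t s * (\<sigma> t s)\<^sup>2)"
    by (intro integral_nonneg integrable_continuous_interval; auto intro!: continuous_intros)+
  then have "integral {0..1} (\<lambda>s. (\<sigma>1 t s)\<^sup>2) = 0"
    using energy_self[OF t] I0 length_pos[OF t] unfolding energy_def
    by (smt (verit) mult_pos_pos zero_less_power)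
  then have "((\<lambda>s. (\<sigma>1 t s)\<^sup>2) has_integral 0) (cbox 0 1)"
    using integrable_integral[OF integrable_continuous_interval[of 0 1 "\<lambda>s. (\<sigma>1 t s)\<^sup>2"]]
    by (auto intro!: continuous_intros)
  then have "(\<lambda>s. (\<sigma>1 t s)\<^sup>2) y = 0" if "y \<in> {0..1}" for y
    using that by (intro has_integral_0_cbox_imp_0[of 0 1]) (auto intro!: continuous_intros)
  then have "(\<sigma> t has_real_derivative 0) (at y within {0..1})" if "y \<in> {0..1}" for y
    using sigma_has_derivative[OF t, of y] that by (auto intro: has_field_derivative_at_within)
  then obtain c where c: "\<And>y. y \<in> {0..1} \<Longrightarrow> \<sigma> t y = c"
    using has_field_derivative_zero_constant[of "{0..1}" "\<sigma> t"] by auto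
  then have "integral {0..1} (\<sigma> t) = c"
    using integral_cong[of "{0..1}" "\<sigma> t" "\<lambda>_. c"] by simp
  then show ?thesis
    using integral_sigma[OF t] c[OF x] by simp
qed

text \<open>Maximum principle: at a minimum point of \<open>\<sigma>\<close> we have \<open>\<sigma>'' \<ge> 0\<close>, so the tension equation
  forces \<open>\<sigma> \<kappa> \<ge> I > 0\<close> there.\<close>
lemma sigma_nonneg:
  assumes t: "t \<in> V" shows "0 \<le> \<sigma> t x"
proof -
  obtain x0 where "x0 \<in> {0..1}" and global_min: "\<And>y. \<sigma> t x0 \<le> \<sigma> t y"
    using periodic_continuous_attains_min[OF sigma_periodic[OF t] continuous_on_sigma[OF t]] by blast
  have "0 \<le> \<sigma> t x0"
  proof (cases "I t = 0")
    case True
    then show ?thesis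
      using sigma_eq_one_if_I_eq_zero[OF t True \<open>x0 \<in> {0..1}\<close>] by simp
  next
    case False
    then have "0 < I t"
      using I_nonneg[OF t] by simp
    have "0 \<le> \<sigma>2 t x0"
      using sigma_has_derivative[OF t] sigma1_has_derivative[OF t] global_min
      by (rule DERIV_local_min_second_nonneg)
    then have "0 < \<sigma> t x0 * \<kappa> t x0"
      using tension_eq[OF t, of x0] \<open>0 < I t\<close> by (smt (verit) mult_nonneg_nonneg zero_le_power2)
    then show ?thesis
      by (smt (verit) mult_nonpos_nonneg zero_le_power2)
  qed
  then show ?thesis
    using global_min[of x] by simp
qed

text \<open>\<open>\<sigma> t\<close> minimises the energy at time \<open>t\<close> among profiles of unit mean: the competitor \<open>\<sigma> t0\<close>
  exceeds it by the energy of the difference, via the weak form tested with \<open>2 \<sigma> t0 - \<sigma> t\<close>.\<close>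
lemma I_le_energy:
  assumes t0: "t0 \<in> V" and t: "t \<in> V" shows "I t \<le> energy t t0"
proof -
  note [continuous_intros] = continuous_on_sigma[OF t] continuous_on_sigma1[OF t] continuous_on_u1[OF t]
    continuous_on_sigma[OF t0] continuous_on_sigma1[OF t0]
  define h h' where "h s = 2 * \<sigma> t0 s - \<sigma> t s" and "h' s = 2 * \<sigma>1 t0 s - \<sigma>1 t s" for s
  define Q where "Q s = (L t)\<^sup>2 * (\<sigma>1 t0 s - \<sigma>1 t s)\<^sup>2 + \<kappa> t s * (\<sigma> t0 s - \<sigma> t s)\<^sup>2" for s
  have "integral {0..1} h = 2 * integral {0..1} (\<sigma> t0) - integral {0..1} (\<sigma> t)"
    unfolding h_def by (subst integral_diff) (auto intro!: integrable_continuous_interval continuous_intros)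
  then have mean: "integral {0..1} h = 1"
    using integral_sigma[OF t] integral_sigma[OF t0] by simp
  have "(h has_real_derivative h' s) (at s)" for s
    unfolding h_def h'_def using t0 t by (intro DERIV_diff DERIV_cmult sigma_has_derivative)
  moreover have "h 1 = h 0"
    using sigma_periodic[OF t, of 0] sigma_periodic[OF t0, of 0] by (simp add: h_def)
  ultimately have weak: "integral {0..1} (\<lambda>s. (L t)\<^sup>2 * \<sigma>1 t s * h' s + \<kappa> t s * \<sigma> t s * h s) = I t"
    using tension_weak_form[OF t] mean by simp
  have "energy t t0 = integral {0..1} (\<lambda>s. Q s + ((L t)\<^sup>2 * \<sigma>1 t s * h' s + \<kappa> t s * \<sigma> t s * h s))"
    unfolding energy_eq_integral[OF t t0] Q_def h_def h'_def
    by (intro integral_cong) (simp add: power2_eq_square algebra_simps)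
  also have "\<dots> = integral {0..1} Q + I t"
    unfolding Q_def h_def h'_def weak[symmetric]
    by (intro integral_add) (auto intro!: integrable_continuous_interval continuous_intros)
  finally have "energy t t0 = integral {0..1} Q + I t" .
  moreover have "0 \<le> integral {0..1} Q"
    unfolding Q_def by (intro integral_nonneg integrable_continuous_interval) (auto intro!: continuous_intros)
  ultimately show ?thesis
    by simp
qed


subsection \<open>Convexity of \<open>L\<^sup>2\<close>\<close>

lemma v_periodic: "t \<in> V \<Longrightarrow> v t (s + 1) = v t s"
  by (simp add: v_def sigma_periodic sigma1_periodic sigma2_periodic u_periodic u1_periodic u2_periodic)

lemma kappa_has_derivative:
  assumes t: "t \<in> V" shows "((\<lambda>\<tau>. \<kappa> \<tau> s) has_real_derivative 2 * (u1 t s \<bullet> dt u1 t s)) (at t)"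
proof -
  have "((\<lambda>\<tau>. u1 \<tau> s \<bullet> u1 \<tau> s) has_vector_derivative u1 t s \<bullet> dt u1 t s + dt u1 t s \<bullet> u1 t s) (at t)"
    using t by (intro bounded_bilinear.has_vector_derivative[OF bounded_bilinear_inner]
        smooth_on2_has_vector_derivative_dt[OF smooth_u1]) auto
  then show ?thesis
    by (simp add: has_real_derivative_iff_has_vector_derivative power2_norm_eq_inner inner_commute)
qed

lemma I_differentiable:
  assumes t: "t \<in> V" shows "\<exists>I'. ((\<lambda>\<tau>. I \<tau>) has_real_derivative I') (at t)"
proof -
  have sub: "V \<times> {0..1} \<subseteq> V \<times> UNIV"
    by auto
  note [continuous_intros] =
    continuous_on_subset[OF smooth_on2_continuous_on[OF smooth_sigma] sub]
    continuous_on_subset[OF smooth_on2_continuous_on[OF smooth_on2_dt[OF smooth_sigma]] sub]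
    continuous_on_subset[OF smooth_on2_continuous_on[OF smooth_u1] sub]
    continuous_on_subset[OF smooth_on2_continuous_on[OF smooth_on2_dt[OF smooth_u1]] sub]
  have "((\<lambda>\<tau>. I \<tau>) has_real_derivative
      integral {0..1} (\<lambda>s. dt \<sigma> t s * \<kappa> t s + \<sigma> t s * (2 * (u1 t s \<bullet> dt u1 t s)))) (at t)"
  proof (rule has_field_derivative_integral_param[OF open_greaterThanLessThan convex_real_interval(8) t])
    fix \<tau> s assume \<tau>: "\<tau> \<in> V"
    have "((\<lambda>\<tau>. \<sigma> \<tau> s) has_real_derivative dt \<sigma> \<tau> s) (at \<tau>)"
      using smooth_on2_has_vector_derivative_dt[OF smooth_sigma, of \<tau> s] \<tau>
      by (simp add: has_real_derivative_iff_has_vector_derivative)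
    from DERIV_mult[OF this kappa_has_derivative[OF \<tau>]]
    show "((\<lambda>\<tau>. \<sigma> \<tau> s * \<kappa> \<tau> s) has_real_derivative
        dt \<sigma> \<tau> s * \<kappa> \<tau> s + \<sigma> \<tau> s * (2 * (u1 \<tau> s \<bullet> dt u1 \<tau> s))) (at \<tau>)"
      by (simp add: algebra_simps)
    show "continuous_on {0..1} (\<lambda>s. \<sigma> \<tau> s * \<kappa> \<tau> s)"
      using \<tau> by (intro continuous_intros continuous_on_sigma continuous_on_u1)
  qed (intro continuous_intros)
  then show ?thesis
    by blast
qed

lemma energy_has_derivative:
  assumes t0: "t0 \<in> V"
  shows "((\<lambda>\<tau>. energy \<tau> t0) has_real_derivative
      - 2 * I t0 / (L t0)\<^sup>2 * integral {0..1} (\<lambda>s. (\<sigma>1 t0 s)\<^sup>2)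
      + integral {0..1} (\<lambda>s. 2 * (u1 t0 s \<bullet> dt u1 t0 s) * (\<sigma> t0 s)\<^sup>2)) (at t0)"
proof -
  have sub: "V \<times> {0..1} \<subseteq> V \<times> UNIV"
    by auto
  have "continuous_on (V \<times> {0..1}) (\<lambda>p. \<sigma> t0 (snd p))"
    by (rule continuous_on_compose2[OF continuous_on_sigma[OF t0, of UNIV]]) (auto intro: continuous_intros)
  note [continuous_intros] = this
    continuous_on_subset[OF smooth_on2_continuous_on[OF smooth_u1] sub]
    continuous_on_subset[OF smooth_on2_continuous_on[OF smooth_on2_dt[OF smooth_u1]] sub]
  have "((\<lambda>\<tau>. integral {0..1} (\<lambda>s. \<kappa> \<tau> s * (\<sigma> t0 s)\<^sup>2)) has_real_derivative
      integral {0..1} (\<lambda>s. 2 * (u1 t0 s \<bullet> dt u1 t0 s) * (\<sigma> t0 s)\<^sup>2)) (at t0)"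
  proof (rule has_field_derivative_integral_param[OF open_greaterThanLessThan convex_real_interval(8) t0,
        where Ft = "\<lambda>\<tau> s. 2 * (u1 \<tau> s \<bullet> dt u1 \<tau> s) * (\<sigma> t0 s)\<^sup>2"])
    fix \<tau> s assume \<tau>: "\<tau> \<in> V"
    show "((\<lambda>\<tau>. \<kappa> \<tau> s * (\<sigma> t0 s)\<^sup>2) has_real_derivative 2 * (u1 \<tau> s \<bullet> dt u1 \<tau> s) * (\<sigma> t0 s)\<^sup>2) (at \<tau>)"
      by (rule DERIV_cmult_right[OF kappa_has_derivative[OF \<tau>]])
    show "continuous_on {0..1} (\<lambda>s. \<kappa> \<tau> s * (\<sigma> t0 s)\<^sup>2)"
      using \<tau> t0 by (intro continuous_intros continuous_on_sigma continuous_on_u1)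
  qed (intro continuous_intros)
  from DERIV_add[OF DERIV_cmult_right[OF length_sq_has_derivative[OF t0]] this]
  show ?thesis
    unfolding energy_def by simp
qed

text \<open>\<open>\<sigma> w = \<partial>\<^sub>s(\<sigma>\<^sup>2 \<partial>\<^sub>s\<^sub>s\<eta>)\<close>, the factor produced by integrating \<open>\<partial>\<^sub>t|\<partial>\<^sub>s\<^sub>s\<eta>|\<^sup>2\<close>
  against \<open>\<sigma>\<^sup>2\<close> by parts.\<close>
definition w :: "real \<Rightarrow> real \<Rightarrow> 'a" where
  "w t s = \<sigma> t s *\<^sub>R u2 t s + (2 * \<sigma>1 t s) *\<^sub>R u1 t s"

lemma v_eq: "v t s = \<sigma>2 t s *\<^sub>R u t s + w t s"
  by (simp add: v_def w_def)

lemma inner_u_w: "t \<in> V \<Longrightarrow> u t s \<bullet> w t s = - \<sigma> t s * (u1 t s \<bullet> u1 t s)"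
  by (simp add: w_def inner_add_right inner_u_u1 inner_u_u2)

lemma curvature_rate_by_parts:
  assumes t: "t \<in> V"
  shows "integral {0..1} (\<lambda>s. 2 * (u1 t s \<bullet> dt u1 t s) * (\<sigma> t s)\<^sup>2)
    = - 2 / (L t)\<^sup>2 * integral {0..1} (\<lambda>s. (\<sigma> t s *\<^sub>R w t s) \<bullet> v t s)"
proof -
  note [continuous_intros] = continuous_on_sigma[OF t] continuous_on_sigma1[OF t]
    continuous_on_u1[OF t] continuous_on_u2[OF t]
  define f where "f s = (\<sigma> t s)\<^sup>2 *\<^sub>R u1 t s" for s
  have "(f has_vector_derivative \<sigma> t s *\<^sub>R w t s) (at s)" for s
  proof -
    have "((\<lambda>r. (\<sigma> t r)\<^sup>2) has_real_derivative 2 * \<sigma> t s * \<sigma>1 t s) (at s)"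
      using DERIV_power[OF sigma_has_derivative[OF t], of 2] by (simp add: mult_ac)
    moreover have "\<sigma> t s *\<^sub>R w t s = (\<sigma> t s)\<^sup>2 *\<^sub>R u2 t s + (2 * \<sigma> t s * \<sigma>1 t s) *\<^sub>R u1 t s"
      by (simp add: w_def scaleR_add_right power2_eq_square mult.left_commute)
    ultimately show ?thesis
      unfolding f_def using has_vector_derivative_scaleR[OF _ u1_has_derivative[OF t]] by simp
  qed
  moreover have "(dt u t has_vector_derivative ds (dt u) t s) (at s)" for s
    using t by (intro smooth_on2_has_vector_derivative_ds[OF smooth_on2_dt[OF smooth_u]]) auto
  moreover have "continuous_on {0..1} (ds (dt u) t)"
    using t by (intro smooth_on2_continuous_on_slice[OF smooth_on2_ds[OF smooth_on2_dt[OF smooth_u]]]) auto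
  moreover have "f 1 \<bullet> dt u t 1 = f 0 \<bullet> dt u t 0"
    using sigma_periodic[OF t, of 0] u1_periodic[OF t, of 0] v_periodic[OF t, of 0]
    by (simp add: f_def dt_u_eq[OF t])
  ultimately have "integral {0..1} (\<lambda>s. (\<sigma> t s *\<^sub>R w t s) \<bullet> dt u t s)
      = - integral {0..1} (\<lambda>s. f s \<bullet> ds (dt u) t s)"
    by (intro integral_by_parts_unit_interval[OF bounded_bilinear_inner])
      (auto simp: w_def intro!: continuous_intros)
  moreover have "f s \<bullet> ds (dt u) t s = (u1 t s \<bullet> dt u1 t s) * (\<sigma> t s)\<^sup>2" for s
    using dt_ds_commute[OF smooth_u open_greaterThanLessThan convex_real_interval(8) t]
    by (simp add: f_def)
  ultimately show ?thesis
    by (simp add: dt_u_eq[OF t] mult.assoc)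
qed

lemma curvature_rate_integrand:
  assumes t: "t \<in> V"
  shows "- 2 * (L t)\<^sup>2 * ((\<sigma> t s *\<^sub>R w t s) \<bullet> v t s) + 2 * I t * (\<kappa> t s * (\<sigma> t s)\<^sup>2)
    = 2 * \<sigma> t s * ((u t s \<bullet> w t s)\<^sup>2 - (L t)\<^sup>2 * (w t s \<bullet> w t s))"
proof -
  have "(\<sigma> t s *\<^sub>R w t s) \<bullet> v t s = \<sigma> t s * \<sigma>2 t s * (u t s \<bullet> w t s) + \<sigma> t s * (w t s \<bullet> w t s)"
    by (simp add: v_eq inner_add_right inner_commute)
  moreover have "\<kappa> t s = u1 t s \<bullet> u1 t s"
    by (simp add: power2_norm_eq_inner)
  ultimately show ?thesis
    using inner_u_w[OF t, of s] tension_eq[OF t, of s] by algebra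
qed

lemma curvature_rate_eq_integral:
  assumes t: "t \<in> V"
  shows "(L t) ^ 4 * integral {0..1} (\<lambda>s. 2 * (u1 t s \<bullet> dt u1 t s) * (\<sigma> t s)\<^sup>2)
      + 2 * I t * integral {0..1} (\<lambda>s. \<kappa> t s * (\<sigma> t s)\<^sup>2)
    = integral {0..1} (\<lambda>s. 2 * \<sigma> t s * ((u t s \<bullet> w t s)\<^sup>2 - (L t)\<^sup>2 * (w t s \<bullet> w t s)))"
proof -
  note [continuous_intros] = continuous_on_sigma[OF t] continuous_on_sigma1[OF t] continuous_on_sigma2[OF t]
    continuous_on_u[OF t] continuous_on_u1[OF t] continuous_on_u2[OF t]
  define X where "X = integral {0..1} (\<lambda>s. (\<sigma> t s *\<^sub>R w t s) \<bullet> v t s)"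
  define Y where "Y = integral {0..1} (\<lambda>s. \<kappa> t s * (\<sigma> t s)\<^sup>2)"
  have "((\<lambda>s. (\<sigma> t s *\<^sub>R w t s) \<bullet> v t s) has_integral X) {0..1}"
    and "((\<lambda>s. \<kappa> t s * (\<sigma> t s)\<^sup>2) has_integral Y) {0..1}"
    unfolding X_def Y_def w_def v_def
    by (auto intro!: integrable_integral integrable_continuous_interval continuous_intros)
  from has_integral_add[OF has_integral_mult_right[OF this(1), of "- 2 * (L t)\<^sup>2"]
      has_integral_mult_right[OF this(2), of "2 * I t"]]
  have "((\<lambda>s. 2 * \<sigma> t s * ((u t s \<bullet> w t s)\<^sup>2 - (L t)\<^sup>2 * (w t s \<bullet> w t s)))
      has_integral - 2 * (L t)\<^sup>2 * X + 2 * I t * Y) {0..1}"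
    by (simp only: curvature_rate_integrand[OF t])
  moreover have "(L t) ^ 4 * integral {0..1} (\<lambda>s. 2 * (u1 t s \<bullet> dt u1 t s) * (\<sigma> t s)\<^sup>2)
      = - 2 * (L t)\<^sup>2 * X"
    using length_pos[OF t] unfolding curvature_rate_by_parts[OF t] X_def
    by (simp add: power4_eq_xxxx power2_eq_square)
  ultimately show ?thesis
    unfolding Y_def by (simp add: integral_unique)
qed

lemma curvature_rate_bound:
  assumes t: "t \<in> V"
  shows "(L t) ^ 4 * integral {0..1} (\<lambda>s. 2 * (u1 t s \<bullet> dt u1 t s) * (\<sigma> t s)\<^sup>2)
    + 2 * I t * integral {0..1} (\<lambda>s. \<kappa> t s * (\<sigma> t s)\<^sup>2) \<le> 0"
proof -
  note [continuous_intros] = continuous_on_sigma[OF t] continuous_on_sigma1[OF t]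
    continuous_on_u[OF t] continuous_on_u1[OF t] continuous_on_u2[OF t]
  have "(u t s \<bullet> w t s)\<^sup>2 \<le> (L t)\<^sup>2 * (w t s \<bullet> w t s)" for s
    using Cauchy_Schwarz_ineq[of "u t s" "w t s"] inner_u_u[OF t, of s] by simp
  then have "0 \<le> integral {0..1} (\<lambda>s. - (2 * \<sigma> t s * ((u t s \<bullet> w t s)\<^sup>2 - (L t)\<^sup>2 * (w t s \<bullet> w t s))))"
    using sigma_nonneg[OF t] unfolding w_def
    by (intro integral_nonneg integrable_continuous_interval)
      (auto intro!: continuous_intros mult_nonneg_nonpos)
  then show ?thesis
    unfolding curvature_rate_eq_integral[OF t] by simp
qed

text \<open>The energy of the frozen profile \<open>\<sigma> t\<close> dominates \<open>I\<close> (\<open>I_le_energy\<close>) and touches it at \<open>t\<close>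
  (\<open>energy_self\<close>), so both have the same derivative there.\<close>
lemma I_has_derivative_eq:
  assumes t: "t \<in> V" and dI: "((\<lambda>\<tau>. I \<tau>) has_real_derivative I') (at t)"
  shows "I' = - 2 * I t / (L t)\<^sup>2 * integral {0..1} (\<lambda>s. (\<sigma>1 t s)\<^sup>2)
    + integral {0..1} (\<lambda>s. 2 * (u1 t s \<bullet> dt u1 t s) * (\<sigma> t s)\<^sup>2)"
proof -
  have pos: "0 < min t (T - t)"
    using t by simp
  have local_min: "\<forall>y. \<bar>t - y\<bar> < min t (T - t) \<longrightarrow> energy t t - I t \<le> energy y t - I y"
  proof (intro allI impI)
    fix y assume "\<bar>t - y\<bar> < min t (T - t)"
    then have "y \<in> V"
      by (auto simp: abs_less_iff)
    then show "energy t t - I t \<le> energy y t - I y"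
      using energy_self[OF t] I_le_energy[OF t] by simp
  qed
  from DERIV_local_min[OF DERIV_diff[OF energy_has_derivative[OF t] dI] pos local_min]
  show ?thesis
    by simp
qed

lemma length_sq_derivative_has_nonneg_derivative:
  assumes t: "t \<in> V"
  shows "\<exists>D2. ((\<lambda>\<tau>. - 2 * I \<tau> / (L \<tau>)\<^sup>2) has_real_derivative D2) (at t) \<and> 0 \<le> D2"
proof -
  obtain I' where dI: "((\<lambda>\<tau>. I \<tau>) has_real_derivative I') (at t)"
    using I_differentiable[OF t] by blast
  define A G G' where "A = integral {0..1} (\<lambda>s. (\<sigma>1 t s)\<^sup>2)"
    and "G = integral {0..1} (\<lambda>s. \<kappa> t s * (\<sigma> t s)\<^sup>2)"
    and "G' = integral {0..1} (\<lambda>s. 2 * (u1 t s \<bullet> dt u1 t s) * (\<sigma> t s)\<^sup>2)"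
  have I': "I' = - 2 * I t / (L t)\<^sup>2 * A + G'"
    using I_has_derivative_eq[OF t dI] by (simp add: A_def G'_def)
  have I: "I t = (L t)\<^sup>2 * A + G"
    using energy_self[OF t] by (simp add: energy_def A_def G_def)
  have "(L t)\<^sup>2 \<noteq> 0"
    using length_pos[OF t] by simp
  note quotient_rule = DERIV_divide[OF DERIV_cmult[OF dI, of "- 2"] length_sq_has_derivative[OF t] this]
  have "(- 2 * I' * (L t)\<^sup>2 - - 2 * I t * (- 2 * I t / (L t)\<^sup>2)) / ((L t)\<^sup>2 * (L t)\<^sup>2)
      = - 2 * ((L t) ^ 4 * G' + 2 * I t * G) / (L t) ^ 6"
    using length_pos[OF t] I unfolding I' by (simp add: field_simps)
  with quotient_rule
  have "((\<lambda>\<tau>. - 2 * I \<tau> / (L \<tau>)\<^sup>2) has_real_derivative - 2 * ((L t) ^ 4 * G' + 2 * I t * G) / (L t) ^ 6)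
      (at t)"
    by (rule DERIV_cong)
  moreover have "0 \<le> - 2 * ((L t) ^ 4 * G' + 2 * I t * G) / (L t) ^ 6"
    using curvature_rate_bound[OF t] length_pos[OF t] by (simp add: G_def G'_def divide_nonpos_pos)
  ultimately show ?thesis
    by blast
qed

end

theorem proposition2p5:
  fixes \<eta> :: "real \<Rightarrow> real \<Rightarrow> 'a::euclidean_space"
    and \<sigma> :: "real \<Rightarrow> real \<Rightarrow> real"
    and tstar :: real
  assumes dim: "DIM('a) \<ge> 2"
    and flow: "ucsf tstar \<eta> \<sigma>"
  shows "(\<forall>t\<in>{0<..<tstar}.
           (curve_length \<eta> has_real_derivative
              (- integral {0..1} (\<lambda>s. \<sigma> t s * (norm (ds (ds \<eta>) t s))^2) / (curve_length \<eta> t)^3))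
             (at t)) \<and>
         (\<exists>D. (\<forall>t\<in>{0<..<tstar}. ((\<lambda>\<tau>. (curve_length \<eta> \<tau>)^2) has_real_derivative D t) (at t)) \<and>
             (\<forall>t\<in>{0<..<tstar}. \<exists>D2. (D has_real_derivative D2) (at t) \<and> 0 \<le> D2))"
proof -
  interpret ucsf_flow tstar \<eta> \<sigma>
    using flow by unfold_locales
  show ?thesis
    using length_has_derivative length_sq_has_derivative length_sq_derivative_has_nonneg_derivative
    by (intro conjI exI[where x = "\<lambda>\<tau>. - 2 * I \<tau> / (L \<tau>)\<^sup>2"] ballI) auto
qed

end
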